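(* For every $j\in\mathbb{N}$ there exists an (effectively computable) integer $n_\Delta(j)$ such that for all integers $n\ge n_\Delta(j)$, \[ \Delta^{[2]}_j(u)(n):=u(n)-2u(n-j)+u(n-2j)>0. \]
   Context: $u(n)$ denotes the number of unimodal sequences of size $n$, i.e. the number of sequences of positive integers $a_1\le\dots\le a_r\le c\ge b_s\ge\dots\ge b_1$ ($r,s\ge0$) summing to $n$; equivalently $\sum_{n\ge0}u(n)q^n=\sum_{n\ge0}\frac{q^n}{(q;q)_n^2}$ with $(a;q)_n=\prod_{j=0}^{n-1}(1-aq^j)$. *)

theory Defs
  imports Main
begin

text \<open>A unimodal sequence a_1 <= ... <= a_r <= c >= b_s >= ... >= b_1 of size n is
  encoded as a triple (as, c, bs): the left part as (nondecreasing list), the peak c and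
  the right part bs (stored as a nondecreasing list b_1 <= ... <= b_s).  The peak c = 0 is only possible for the empty sequence
  (n = 0), matching the n = 0 term of the generating function sum q^n/(q;q)_n^2.\<close>

definition unimodal_seqs :: "nat \<Rightarrow> (nat list \<times> nat \<times> nat list) set" where
  "unimodal_seqs n = {(as, c, bs). sorted as \<and> sorted bs \<and>
      (\<forall>x\<in>set as. 0 < x \<and> x \<le> c) \<and> (\<forall>x\<in>set bs. 0 < x \<and> x \<le> c) \<and>
      sum_list as + c + sum_list bs = n}"

definition u :: "nat \<Rightarrow> nat" where
  "u n = card (unimodal_seqs n)"

end

theory Submission
  imports Defs
begin

text \<open>Split the unimodal sequences of size n by whether the peak is at least j.
  Among those with peak at least j, adding a part j to the left side, or to the right side
  when the left side has none, is a bijection from size n - j; hence the second difference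
  of their count is the number Z(n) of such sequences of size n having no part j at all.
  The count of sequences with peak below j is weakly increasing in n (prepend parts 1),
  and raising the peak by j injects those of size n - j into the sequences counted by Z(n),
  missing the one-part sequence n.  Together these make the second difference of u positive
  as soon as n \<ge> 2j.\<close>

lemma length_le_sum_list: "\<forall>x\<in>set xs. 0 < x \<Longrightarrow> length xs \<le> sum_list (xs :: nat list)"
  by (induction xs) auto

lemma sum_list_insort:
  fixes x :: "'a :: {linorder, comm_monoid_add}"
  shows "sum_list (insort x xs) = x + sum_list xs"
  by (induction xs) (auto simp: add.left_commute)

lemma sum_list_remove1:
  fixes x :: "'a :: comm_monoid_add"
  shows "x \<in> set xs \<Longrightarrow> sum_list xs = x + sum_list (remove1 x xs)"
  using sum_list_map_remove1[of x xs "\<lambda>y. y"] by simp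

lemma unimodal_seqs_peak_pos:
  assumes "(as, c, bs) \<in> unimodal_seqs n" and "0 < n"
  shows "0 < c"
proof (rule ccontr)
  assume "\<not> 0 < c"
  from assms(1) have "\<forall>x\<in>set as. 0 < x \<and> x \<le> c" "\<forall>x\<in>set bs. 0 < x \<and> x \<le> c"
    and size: "sum_list as + c + sum_list bs = n"
    by (simp_all add: unimodal_seqs_def)
  with \<open>\<not> 0 < c\<close> have "set as = {}" "set bs = {}"
    by (meson equals0I less_le_trans)+
  with size \<open>0 < n\<close> \<open>\<not> 0 < c\<close> show False
    by simp
qed

lemma finite_unimodal_seqs: "finite (unimodal_seqs n)"
proof -
  let ?L = "{xs. set xs \<subseteq> {..n} \<and> length xs \<le> n}"
  have parts_in_L: "set xs \<subseteq> {..n} \<and> length xs \<le> n"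
    if "\<forall>x\<in>set xs. 0 < x" and "sum_list xs \<le> n" for xs
    using that length_le_sum_list[of xs] member_le_sum_list[of _ xs] by force
  have "x \<in> ?L \<times> {..n} \<times> ?L" if "x \<in> unimodal_seqs n" for x
  proof -
    obtain as c bs where x: "x = (as, c, bs)" by (rule prod_cases3)
    with that have "\<forall>x\<in>set as. 0 < x" "\<forall>x\<in>set bs. 0 < x"
      and "sum_list as \<le> n" "sum_list bs \<le> n" "c \<le> n"
      by (auto simp: unimodal_seqs_def)
    then show ?thesis
      by (simp add: x parts_in_L)
  qed
  then have "unimodal_seqs n \<subseteq> ?L \<times> {..n} \<times> ?L" by (rule subsetI)
  moreover have "finite (?L \<times> {..n} \<times> ?L)"
    by (intro finite_cartesian_product finite_lists_length_le) auto
  ultimately show ?thesis by (rule finite_subset)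
qed

lemma finite_unimodal_seqs_filter: "finite {(as, c, bs) \<in> unimodal_seqs n. P as c bs}"
  by (rule rev_finite_subset[OF finite_unimodal_seqs]) auto

lemma card_unimodal_seqs_split:
  "card {(as, c, bs) \<in> unimodal_seqs n. P as c bs}
     = card {(as, c, bs) \<in> unimodal_seqs n. P as c bs \<and> Q as c bs}
     + card {(as, c, bs) \<in> unimodal_seqs n. P as c bs \<and> \<not> Q as c bs}"
proof -
  have "{(as, c, bs) \<in> unimodal_seqs n. P as c bs}
      = {(as, c, bs) \<in> unimodal_seqs n. P as c bs \<and> Q as c bs}
      \<union> {(as, c, bs) \<in> unimodal_seqs n. P as c bs \<and> \<not> Q as c bs}"
    by auto
  also have "card \<dots> = card {(as, c, bs) \<in> unimodal_seqs n. P as c bs \<and> Q as c bs}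
      + card {(as, c, bs) \<in> unimodal_seqs n. P as c bs \<and> \<not> Q as c bs}"
    by (rule card_Un_disjoint) (auto simp: finite_unimodal_seqs_filter)
  finally show ?thesis .
qed

lemma card_peak_ge_with_left_part:
  assumes "0 < j"
  shows "card {(as, c, bs) \<in> unimodal_seqs (m + j). j \<le> c \<and> j \<in> set as}
       = card {(as, c, bs) \<in> unimodal_seqs m. j \<le> c}"
proof -
  have "bij_betw (\<lambda>(as, c, bs). (insort j as, c, bs))
      {(as, c, bs) \<in> unimodal_seqs m. j \<le> c}
      {(as, c, bs) \<in> unimodal_seqs (m + j). j \<le> c \<and> j \<in> set as}"
  proof (rule bij_betw_byWitness[where f'="\<lambda>(as, c, bs). (remove1 j as, c, bs)"])
    show "(\<lambda>(as, c, bs). (insort j as, c, bs)) ` {(as, c, bs) \<in> unimodal_seqs m. j \<le> c}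
       \<subseteq> {(as, c, bs) \<in> unimodal_seqs (m + j). j \<le> c \<and> j \<in> set as}"
      using assms by (auto simp: unimodal_seqs_def sorted_insort set_insort_key sum_list_insort)
    show "(\<lambda>(as, c, bs). (remove1 j as, c, bs)) `
        {(as, c, bs) \<in> unimodal_seqs (m + j). j \<le> c \<and> j \<in> set as}
       \<subseteq> {(as, c, bs) \<in> unimodal_seqs m. j \<le> c}"
    proof (clarsimp simp: unimodal_seqs_def sorted_remove1)
      fix as c bs
      assume "\<forall>x\<in>set as. 0 < x \<and> x \<le> c" "sum_list as + c + sum_list bs = m + j" "j \<in> set as"
      then show "(\<forall>x\<in>set (remove1 j as). 0 < x \<and> x \<le> c)
          \<and> sum_list (remove1 j as) + c + sum_list bs = m"
        using sum_list_remove1[of j as] set_remove1_subset[of j as] by auto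
    qed
  qed (auto simp: unimodal_seqs_def insort_remove1)
  then show ?thesis by (simp add: bij_betw_same_card)
qed

lemma card_peak_ge_with_right_part:
  assumes "0 < j"
  shows "card {(as, c, bs) \<in> unimodal_seqs (m + j). j \<le> c \<and> j \<notin> set as \<and> j \<in> set bs}
       = card {(as, c, bs) \<in> unimodal_seqs m. j \<le> c \<and> j \<notin> set as}"
proof -
  have "bij_betw (\<lambda>(as, c, bs). (as, c, insort j bs))
      {(as, c, bs) \<in> unimodal_seqs m. j \<le> c \<and> j \<notin> set as}
      {(as, c, bs) \<in> unimodal_seqs (m + j). j \<le> c \<and> j \<notin> set as \<and> j \<in> set bs}"
  proof (rule bij_betw_byWitness[where f'="\<lambda>(as, c, bs). (as, c, remove1 j bs)"])
    show "(\<lambda>(as, c, bs). (as, c, insort j bs)) `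
        {(as, c, bs) \<in> unimodal_seqs m. j \<le> c \<and> j \<notin> set as}
       \<subseteq> {(as, c, bs) \<in> unimodal_seqs (m + j). j \<le> c \<and> j \<notin> set as \<and> j \<in> set bs}"
      using assms by (auto simp: unimodal_seqs_def sorted_insort set_insort_key sum_list_insort)
    show "(\<lambda>(as, c, bs). (as, c, remove1 j bs)) `
        {(as, c, bs) \<in> unimodal_seqs (m + j). j \<le> c \<and> j \<notin> set as \<and> j \<in> set bs}
       \<subseteq> {(as, c, bs) \<in> unimodal_seqs m. j \<le> c \<and> j \<notin> set as}"
    proof (clarsimp simp: unimodal_seqs_def sorted_remove1)
      fix as c bs
      assume "\<forall>x\<in>set bs. 0 < x \<and> x \<le> c" "sum_list as + c + sum_list bs = m + j" "j \<in> set bs"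
      then show "(\<forall>x\<in>set (remove1 j bs). 0 < x \<and> x \<le> c)
          \<and> sum_list as + c + sum_list (remove1 j bs) = m"
        using sum_list_remove1[of j bs] set_remove1_subset[of j bs] by auto
    qed
  qed (auto simp: unimodal_seqs_def insort_remove1)
  then show ?thesis by (simp add: bij_betw_same_card)
qed

lemma card_peak_lt_mono:
  assumes "0 < m"
  shows "card {(as, c, bs) \<in> unimodal_seqs m. c < j}
       \<le> card {(as, c, bs) \<in> unimodal_seqs (m + k). c < j}"
proof (rule card_inj_on_le[where f="\<lambda>(as, c, bs). (replicate k 1 @ as, c, bs)"])
  show "inj_on (\<lambda>(as, c, bs). (replicate k 1 @ as, c, bs))
      {(as, c, bs) \<in> unimodal_seqs m. c < j}"
    by (auto simp: inj_on_def)
  have "(replicate k 1 @ as, c, bs) \<in> unimodal_seqs (m + k)"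
    if "(as, c, bs) \<in> unimodal_seqs m" for as c bs
  proof -
    have "0 < c" using unimodal_seqs_peak_pos[OF that assms] .
    with that show ?thesis
      by (auto simp: unimodal_seqs_def sorted_append sum_list_replicate)
  qed
  then show "(\<lambda>(as, c, bs). (replicate k 1 @ as, c, bs)) ` {(as, c, bs) \<in> unimodal_seqs m. c < j}
      \<subseteq> {(as, c, bs) \<in> unimodal_seqs (m + k). c < j}"
    by auto
qed (rule finite_unimodal_seqs_filter)

lemma card_peak_lt_less_card_peak_ge_without_part:
  assumes "j \<le> m"
  shows "card {(as, c, bs) \<in> unimodal_seqs m. c < j}
       < card {(as, c, bs) \<in> unimodal_seqs (m + j). j \<le> c \<and> j \<notin> set as \<and> j \<notin> set bs}"
    (is "card ?A < card ?B")
proof -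
  have raise_peak: "(as, c + j, bs) \<in> ?B - {([], m + j, [])}" if "(as, c, bs) \<in> ?A" for as c bs
  proof -
    from that have "\<forall>x\<in>set as. x \<le> c" "\<forall>x\<in>set bs. x \<le> c" "c < j"
      and "sum_list as + c + sum_list bs = m"
      by (auto simp: unimodal_seqs_def)
    then have "j \<notin> set as" "j \<notin> set bs" "(as, bs) \<noteq> ([], [])"
      using assms by (auto dest: leD)
    with that show ?thesis
      by (auto simp: unimodal_seqs_def)
  qed
  have "card ?A \<le> card (?B - {([], m + j, [])})"
  proof (rule card_inj_on_le[where f="\<lambda>(as, c, bs). (as, c + j, bs)"])
    show "inj_on (\<lambda>(as, c, bs). (as, c + j, bs)) ?A"
      by (auto simp: inj_on_def)
    show "(\<lambda>(as, c, bs). (as, c + j, bs)) ` ?A \<subseteq> ?B - {([], m + j, [])}"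
      using raise_peak by fast
  qed (simp add: finite_unimodal_seqs_filter)
  also have "\<dots> < card ?B"
    by (rule card_Diff1_less[OF finite_unimodal_seqs_filter]) (simp add: unimodal_seqs_def)
  finally show ?thesis .
qed

lemma second_difference_card_peak_ge:
  assumes "0 < j"
  defines "P k \<equiv> card {(as, c, bs) \<in> unimodal_seqs k. j \<le> c}"
  shows "P (m + 2 * j) + P m = 2 * P (m + j)
    + card {(as, c, bs) \<in> unimodal_seqs (m + 2 * j). j \<le> c \<and> j \<notin> set as \<and> j \<notin> set bs}"
proof -
  define N where "N k = card {(as, c, bs) \<in> unimodal_seqs k. j \<le> c \<and> j \<notin> set as}" for k
  define Z where
    "Z k = card {(as, c, bs) \<in> unimodal_seqs k. j \<le> c \<and> j \<notin> set as \<and> j \<notin> set bs}" for k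
  have P_step: "P (k + j) = P k + N (k + j)" for k
  proof -
    have "P (k + j)
        = card {(as, c, bs) \<in> unimodal_seqs (k + j). j \<le> c \<and> j \<in> set as} + N (k + j)"
      unfolding P_def N_def
      by (rule card_unimodal_seqs_split[where Q = "\<lambda>as c bs. j \<in> set as"])
    then show ?thesis
      using card_peak_ge_with_left_part[OF assms(1)] by (simp add: P_def)
  qed
  have N_step: "N (k + j) = N k + Z (k + j)" for k
  proof -
    have "N (k + j) = Z (k + j)
        + card {(as, c, bs) \<in> unimodal_seqs (k + j). j \<le> c \<and> j \<notin> set as \<and> j \<in> set bs}"
      unfolding N_def Z_def
      using card_unimodal_seqs_split[of "k + j" "\<lambda>as c bs. j \<le> c \<and> j \<notin> set as"
          "\<lambda>as c bs. j \<notin> set bs"]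
      by (simp add: conj_assoc)
    then show ?thesis
      using card_peak_ge_with_right_part[OF assms(1)] by (simp add: N_def)
  qed
  show ?thesis
    using P_step[of m] P_step[of "m + j"] N_step[of "m + j"] unfolding Z_def
    by (simp add: mult_2 add.assoc)
qed

theorem theorem1p3:
  fixes j :: nat
  assumes "j \<ge> 1"
  shows "\<exists>N::nat. \<forall>n\<ge>N. int (u n) - 2 * int (u (n - j)) + int (u (n - 2 * j)) > 0"
proof (intro exI allI impI)
  fix n assume "2 * j \<le> n"
  then obtain m where n: "n = m + 2 * j"
    using le_Suc_ex by (metis add.commute)
  define P where "P k = card {(as, c, bs) \<in> unimodal_seqs k. j \<le> c}" for k
  define Q where "Q k = card {(as, c, bs) \<in> unimodal_seqs k. c < j}" for k
  define Z where
    "Z = card {(as, c, bs) \<in> unimodal_seqs n. j \<le> c \<and> j \<notin> set as \<and> j \<notin> set bs}"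
  have u_split: "u k = P k + Q k" for k
    unfolding u_def P_def Q_def
    using card_unimodal_seqs_split[where P = "\<lambda>_ _ _. True" and Q = "\<lambda>as c bs. j \<le> c"]
    by (simp add: not_le)
  have "P n + P m = 2 * P (m + j) + Z"
    using second_difference_card_peak_ge[of j m] assms unfolding n P_def Z_def by simp
  moreover have "Q (m + j) \<le> Q n"
    using card_peak_lt_mono[of "m + j" j j] assms unfolding n Q_def by (simp add: mult_2 add.assoc)
  moreover have "Q (m + j) < Z"
    using card_peak_lt_less_card_peak_ge_without_part[of j "m + j"] unfolding n Q_def Z_def
    by (simp add: mult_2 add.assoc)
  moreover have "n - j = m + j" "n - 2 * j = m" using n by simp_all
  ultimately show "int (u n) - 2 * int (u (n - j)) + int (u (n - 2 * j)) > 0"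
    using u_split[of n] u_split[of "m + j"] u_split[of m] by simp
qed

end
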